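(* Fix $a$ and $q$ (with $|q|<1$, or formally), and let $(\boldsymbol{\alpha}_n(a))_{n\ge0}$ be a sequence with $\boldsymbol{\alpha}_0(a)=1$ that does not depend on $k$. For each $k$ let $\boldsymbol{\beta}_n(a,k)$ be defined so that $(\boldsymbol{\alpha}_n(a),\boldsymbol{\beta}_n(a,k))$ is a WP-Bailey pair (relative to $a$, with parameter $k$), and set $\boldsymbol{\beta}_{-1}(a,k):=0$. Define $\boldsymbol{\alpha}^*_0(a)=\boldsymbol{\beta}^*_0(a,k)=1$ and, for $n\ge1$, \[ \boldsymbol{\alpha}_n^*(a) = (aq^n+q^{-n})\boldsymbol{\alpha}_n(a), \] \[ \boldsymbol{\beta}_n^*(a,k) = \frac{(1+aq^{2n})\boldsymbol{\beta}_n(a,k)-(1-k)\left(1-\frac{k}{a}\right)\boldsymbol{\beta}_{n-1}(a,kq)}{q^{n}} - a\,\frac{(k,k/a;q)_{n}}{(aq,q;q)_{n}}. \] Then $(\boldsymbol{\alpha}_n^*(a),\boldsymbol{\beta}_n^*(a,k))$ is a WP-Bailey pair (relative to $a$, with parameter $k$).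
   Context: Notation: $(x;q)_n=\prod_{i=0}^{n-1}(1-xq^i)$, $(x_1,\dots,x_j;q)_n=(x_1;q)_n\cdots(x_j;q)_n$, and similarly for $n=\infty$. A pair of sequences $(\boldsymbol{\alpha}_n(a,k,q),\boldsymbol{\beta}_n(a,k,q))_{n\ge0}$ is a WP-Bailey pair (relative to $a$, with parameter $k$) if $\boldsymbol{\alpha}_0=1$ and for all $n\ge0$ \[\boldsymbol{\beta}_n=\sum_{j=0}^n\frac{(k/a;q)_{n-j}(k;q)_{n+j}}{(q;q)_{n-j}(aq;q)_{n+j}}\boldsymbol{\alpha}_j.\] Parameters are assumed generic so that no denominator vanishes. *)

theory Defs
  imports Complex_Main
begin

definition qpoch :: "complex \<Rightarrow> complex \<Rightarrow> nat \<Rightarrow> complex" where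
  "qpoch x q n = (\<Prod>i<n. (1 - x * q ^ i))"

definition WP_Bailey ::
  "complex \<Rightarrow> complex \<Rightarrow> complex \<Rightarrow> (nat \<Rightarrow> complex) \<Rightarrow> (nat \<Rightarrow> complex) \<Rightarrow> bool" where
  "WP_Bailey a k q \<alpha> \<beta> \<longleftrightarrow>
     \<alpha> 0 = 1 \<and>
     (\<forall>n. \<beta> n = (\<Sum>j\<le>n. (qpoch (k / a) q (n - j) * qpoch k q (n + j)) /
                            (qpoch q q (n - j) * qpoch (a * q) q (n + j)) * \<alpha> j))"

end

theory Submission
  imports Defs
begin

text \<open>
  Write \<open>c(n,j;k)\<close> for the coefficient of \<open>\<alpha>\<^sub>j\<close> in \<open>\<beta>\<^sub>n(k)\<close>. Peeling one factor off each
  q-Pochhammer symbol gives \<open>(1 - k)(1 - k/a) c(n-1,j;kq) = c(n,j;k) (1 - q^(n-j)) (1 - a q^(n+j))\<close>,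
  so \<open>(1 + a q^(2n)) \<beta>\<^sub>n(k) - (1 - k)(1 - k/a) \<beta>\<^sub>n\<^sub>-\<^sub>1(kq)\<close> is the sum of the \<open>c(n,j;k) \<alpha>\<^sub>j\<close>
  weighted by \<open>(1 + a q^(2n)) - (1 - q^(n-j))(1 - a q^(n+j)) = q^n (a q^j + q^(-j))\<close>. After dividing
  by \<open>q^n\<close> only the term \<open>j = 0\<close> differs from the sum defining \<open>\<beta>\<^sup>*\<^sub>n\<close>: it has weight \<open>a + 1\<close>
  instead of 1, and the surplus \<open>a c(n,0;k)\<close> is the correction term.
\<close>

lemma qpoch_0 [simp]: "qpoch x q 0 = 1"
  by (simp add: qpoch_def)

lemma qpoch_Suc: "qpoch x q (Suc m) = qpoch x q m * (1 - x * q ^ m)"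
  by (simp add: qpoch_def)

lemma qpoch_Suc_shift: "qpoch x q (Suc m) = (1 - x) * qpoch (x * q) q m"
  unfolding qpoch_def by (subst prod.lessThan_Suc_shift) (simp add: mult.assoc)

definition wp_coeff :: "complex \<Rightarrow> complex \<Rightarrow> complex \<Rightarrow> nat \<Rightarrow> nat \<Rightarrow> complex" where
  "wp_coeff a k q n j =
     (qpoch (k / a) q (n - j) * qpoch k q (n + j)) / (qpoch q q (n - j) * qpoch (a * q) q (n + j))"

lemma WP_Bailey_iff:
  "WP_Bailey a k q \<alpha> \<beta> \<longleftrightarrow> \<alpha> 0 = 1 \<and> (\<forall>n. \<beta> n = (\<Sum>j\<le>n. wp_coeff a k q n j * \<alpha> j))"
  by (simp add: WP_Bailey_def wp_coeff_def)

lemma wp_coeff_param_shift: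
  assumes "j \<le> n"
    and qq: "qpoch q q (Suc n - j) \<noteq> 0" and aq: "qpoch (a * q) q (Suc n + j) \<noteq> 0"
  shows "(1 - k) * (1 - k / a) * wp_coeff a (k * q) q n j
       = wp_coeff a k q (Suc n) j * ((1 - q ^ (Suc n - j)) * (1 - a * q ^ (Suc n + j)))"
proof -
  have minus: "Suc n - j = Suc (n - j)" and plus: "Suc n + j = Suc (n + j)"
    using \<open>j \<le> n\<close> by auto
  have ka: "qpoch (k / a) q (Suc (n - j)) = (1 - k / a) * qpoch (k * q / a) q (n - j)"
    by (subst qpoch_Suc_shift) (simp add: field_simps)
  have k: "qpoch k q (Suc (n + j)) = (1 - k) * qpoch (k * q) q (n + j)"
    by (rule qpoch_Suc_shift)
  have qq': "qpoch q q (Suc (n - j)) = qpoch q q (n - j) * (1 - q ^ Suc (n - j))"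
    by (simp add: qpoch_Suc)
  have aq': "qpoch (a * q) q (Suc (n + j)) = qpoch (a * q) q (n + j) * (1 - a * q ^ Suc (n + j))"
    by (simp add: qpoch_Suc mult.assoc)
  have "qpoch q q (n - j) * (1 - q ^ Suc (n - j)) \<noteq> 0"
    "qpoch (a * q) q (n + j) * (1 - a * q ^ Suc (n + j)) \<noteq> 0"
    using qq aq by (metis minus qq', metis plus aq')
  then show ?thesis
    unfolding wp_coeff_def minus plus ka k qq' aq' by (simp add: ac_simps)
qed

lemma WP_Bailey_param_shift_sum:
  assumes pair: "WP_Bailey a (k * q) q \<alpha> \<beta>"
    and qq: "\<forall>m. qpoch q q m \<noteq> 0" and aq: "\<forall>m. qpoch (a * q) q m \<noteq> 0"
  shows "(1 - k) * (1 - k / a) * \<beta> n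
       = (\<Sum>j\<le>Suc n. wp_coeff a k q (Suc n) j
                      * ((1 - q ^ (Suc n - j)) * (1 - a * q ^ (Suc n + j))) * \<alpha> j)"
proof -
  have "(1 - k) * (1 - k / a) * \<beta> n = (\<Sum>j\<le>n. (1 - k) * (1 - k / a) * wp_coeff a (k * q) q n j * \<alpha> j)"
    using pair by (simp add: WP_Bailey_iff sum_distrib_left mult.assoc)
  also have "\<dots> = (\<Sum>j\<le>n. wp_coeff a k q (Suc n) j
                      * ((1 - q ^ (Suc n - j)) * (1 - a * q ^ (Suc n + j))) * \<alpha> j)"
    using wp_coeff_param_shift qq aq by (intro sum.cong) auto
  also have "\<dots> = (\<Sum>j\<le>Suc n. wp_coeff a k q (Suc n) j
                      * ((1 - q ^ (Suc n - j)) * (1 - a * q ^ (Suc n + j))) * \<alpha> j)"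
    by simp
  finally show ?thesis .
qed

lemma bailey_weight_identity:
  fixes a q :: complex
  assumes "j \<le> n" and "q \<noteq> 0"
  shows "((1 + a * q ^ (2 * n)) - (1 - q ^ (n - j)) * (1 - a * q ^ (n + j))) / q ^ n
       = a * q ^ j + inverse (q ^ j)"
proof -
  have "n - j + j = n" "n - j + (n + j) = 2 * n"
    using \<open>j \<le> n\<close> by auto
  then have "q ^ n = q ^ (n - j) * q ^ j" "q ^ (2 * n) = q ^ (n - j) * q ^ (n + j)"
    by (metis power_add)+
  with \<open>q \<noteq> 0\<close> show ?thesis
    by (simp add: field_simps power_add)
qed

lemma WP_Bailey_recombination:
  assumes pair: "WP_Bailey a k q \<alpha> \<beta>" and shifted: "WP_Bailey a (k * q) q \<alpha> \<beta>'"
    and q: "q \<noteq> 0" and qq: "\<forall>m. qpoch q q m \<noteq> 0" and aq: "\<forall>m. qpoch (a * q) q m \<noteq> 0"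
  shows "((1 + a * q ^ (2 * Suc n)) * \<beta> (Suc n) - (1 - k) * (1 - k / a) * \<beta>' n) / q ^ Suc n
       = (\<Sum>j\<le>Suc n. wp_coeff a k q (Suc n) j * (a * q ^ j + inverse (q ^ j)) * \<alpha> j)"
proof -
  define w where "w j = (1 + a * q ^ (2 * Suc n)) - (1 - q ^ (Suc n - j)) * (1 - a * q ^ (Suc n + j))"
    for j
  have "(1 + a * q ^ (2 * Suc n)) * \<beta> (Suc n) - (1 - k) * (1 - k / a) * \<beta>' n
      = (\<Sum>j\<le>Suc n. wp_coeff a k q (Suc n) j * (1 + a * q ^ (2 * Suc n)) * \<alpha> j
          - wp_coeff a k q (Suc n) j * ((1 - q ^ (Suc n - j)) * (1 - a * q ^ (Suc n + j))) * \<alpha> j)"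
    using pair unfolding WP_Bailey_param_shift_sum[OF shifted qq aq] sum_subtractf
    by (simp add: WP_Bailey_iff sum_distrib_left sum.distrib distrib_left ac_simps)
  also have "\<dots> = (\<Sum>j\<le>Suc n. wp_coeff a k q (Suc n) j * w j * \<alpha> j)"
    by (simp only: w_def algebra_simps)
  finally have "((1 + a * q ^ (2 * Suc n)) * \<beta> (Suc n) - (1 - k) * (1 - k / a) * \<beta>' n) / q ^ Suc n
      = (\<Sum>j\<le>Suc n. wp_coeff a k q (Suc n) j * (w j / q ^ Suc n) * \<alpha> j)"
    by (simp add: sum_divide_distrib add_divide_distrib)
  also have "\<dots> = (\<Sum>j\<le>Suc n. wp_coeff a k q (Suc n) j * (a * q ^ j + inverse (q ^ j)) * \<alpha> j)"
    unfolding w_def by (intro sum.cong refl, subst bailey_weight_identity) (use q in auto)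
  finally show ?thesis .
qed

theorem mainTheorem1:
  fixes a q k :: complex
    and \<alpha> :: "nat \<Rightarrow> complex"
    and \<beta> :: "complex \<Rightarrow> nat \<Rightarrow> complex"
  assumes a_nz: "a \<noteq> 0"
    and q_nz: "q \<noteq> 0"
    and qq_nz: "\<forall>m. qpoch q q m \<noteq> 0"
    and aq_nz: "\<forall>m. qpoch (a * q) q m \<noteq> 0"
    and alpha0: "\<alpha> 0 = 1"
    and pairs: "\<forall>k'. WP_Bailey a k' q \<alpha> (\<beta> k')"
  shows "WP_Bailey a k q
           (\<lambda>n. if n = 0 then 1 else (a * q ^ n + inverse (q ^ n)) * \<alpha> n)
           (\<lambda>n. if n = 0 then 1 else
                 ((1 + a * q ^ (2 * n)) * \<beta> k n
                   - (1 - k) * (1 - k / a) * \<beta> (k * q) (n - 1)) / q ^ n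
                 - a * (qpoch k q n * qpoch (k / a) q n) / (qpoch (a * q) q n * qpoch q q n))"
proof -
  \<comment> \<open>\<open>a \<noteq> 0\<close> is never used: the identities hold with HOL's junk value \<open>k / 0 = 0\<close> as well.\<close>
  have pair: "WP_Bailey a k q \<alpha> (\<beta> k)" and shifted: "WP_Bailey a (k * q) q \<alpha> (\<beta> (k * q))"
    using pairs by blast+
  show ?thesis unfolding WP_Bailey_iff
  proof (intro conjI allI)
    fix n
    show "(if n = 0 then 1 else
             ((1 + a * q ^ (2 * n)) * \<beta> k n - (1 - k) * (1 - k / a) * \<beta> (k * q) (n - 1)) / q ^ n
             - a * (qpoch k q n * qpoch (k / a) q n) / (qpoch (a * q) q n * qpoch q q n))
        = (\<Sum>j\<le>n. wp_coeff a k q n j * (if j = 0 then 1 else (a * q ^ j + inverse (q ^ j)) * \<alpha> j))"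
    proof (cases n)
      case 0
      then show ?thesis by (simp add: wp_coeff_def)
    next
      case (Suc m)
      have "(\<Sum>j\<le>n. wp_coeff a k q n j * (if j = 0 then 1 else (a * q ^ j + inverse (q ^ j)) * \<alpha> j))
          = (\<Sum>j\<le>n. wp_coeff a k q n j * (a * q ^ j + inverse (q ^ j)) * \<alpha> j) - a * wp_coeff a k q n 0"
        unfolding Suc sum.atMost_Suc_shift by (simp add: alpha0 algebra_simps)
      then show ?thesis
        using WP_Bailey_recombination[OF pair shifted q_nz qq_nz aq_nz, of m]
        by (simp add: Suc wp_coeff_def ac_simps)
    qed
  qed simp
qed

end
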